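(* Every Schubert variety $X_w$ ($w\in S_n$) in $GL_n(\mathbb{C})/B$, including $G/B=X_{w_0}$ itself, is Palais–Smale.
   Context: Let $G=GL_n(\mathbb{C})$, $B$ the invertible upper-triangular matrices, and $T$ the diagonal matrices, acting on $G/B$ by left multiplication. Permutations are identified with permutation matrices via $we_i=e_{w(i)}$, and $s_{jk}$ is the transposition of $j$ and $k$. The Schubert variety is $X_w=\overline{BwB/B}$. The Bruhat order is defined by $v\le w$ iff $[v]\in X_w$, and $\ell(w)=\dim X_w$ is the number of pairs $i<j$ with $w^{-1}(i)>w^{-1}(j)$. $w_0$ is the longest permutation. The moment graph of $X_w$ (a GKM variety) has vertices $\{v\in S_n: v\le w\}$ and an (undirected) edge between $v$ and $s_{jk}v$ for every $j<k$ with both $v,s_{jk}v\le w$, labeled by the torus weight $\pm(t_j-t_k)$. A GKM variety is called Palais–Smale if its moment graph can be directed so that there is an edge directed from $v$ to $u$ only if there are more edges directed out of $v$ than out of $u$. *)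

theory Defs
  imports "HOL-Combinatorics.Combinatorics"
begin

text \<open>Permutations of S_n are modelled as functions nat => nat permuting {..<n}
  (indices 0..n-1 instead of 1..n).\<close>

type_synonym perm = "nat \<Rightarrow> nat"

definition Sn :: "nat \<Rightarrow> perm set" where
  "Sn n = {w. w permutes {..<n}}"

definition perm_length :: "nat \<Rightarrow> perm \<Rightarrow> nat" where
  "perm_length n w = card {(i, j). i < j \<and> j < n \<and> inv w i > inv w j}"

definition bruhat_step :: "nat \<Rightarrow> perm \<Rightarrow> perm \<Rightarrow> bool" where
  "bruhat_step n v u \<longleftrightarrow> v \<in> Sn n \<and>
     (\<exists>j k. j < k \<and> k < n \<and> u = transpose j k \<circ> v \<and> perm_length n v < perm_length n u)"

definition bruhat_le :: "nat \<Rightarrow> perm \<Rightarrow> perm \<Rightarrow> bool" where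
  "bruhat_le n v w \<longleftrightarrow> v \<in> Sn n \<and> (bruhat_step n)\<^sup>*\<^sup>* v w"

definition mg_vertices :: "nat \<Rightarrow> perm \<Rightarrow> perm set" where
  "mg_vertices n w = {v \<in> Sn n. bruhat_le n v w}"

definition mg_edges :: "nat \<Rightarrow> perm \<Rightarrow> perm set set" where
  "mg_edges n w = {{v, transpose j k \<circ> v} | v j k.
      j < k \<and> k < n \<and> v \<in> mg_vertices n w \<and> transpose j k \<circ> v \<in> mg_vertices n w}"

definition is_orientation :: "'a set set \<Rightarrow> ('a \<times> 'a) set \<Rightarrow> bool" where
  "is_orientation E D \<longleftrightarrow>
     (\<forall>(x, y) \<in> D. {x, y} \<in> E) \<and>
     (\<forall>e \<in> E. \<exists>x y. e = {x, y} \<and> x \<noteq> y \<and> ((x, y) \<in> D \<longleftrightarrow> (y, x) \<notin> D))"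

definition out_degree :: "('a \<times> 'a) set \<Rightarrow> 'a \<Rightarrow> nat" where
  "out_degree D v = card {u. (v, u) \<in> D}"

definition palais_smale_graph :: "'a set set \<Rightarrow> bool" where
  "palais_smale_graph E \<longleftrightarrow> (\<exists>D. is_orientation E D \<and>
      (\<forall>(v, u) \<in> D. out_degree D u < out_degree D v))"

definition schubert_palais_smale :: "nat \<Rightarrow> perm \<Rightarrow> bool" where
  "schubert_palais_smale n w \<longleftrightarrow> palais_smale_graph (mg_edges n w)"

end

theory Submission
  imports Defs
begin

text \<open>Direct every edge of the moment graph from the longer to the shorter permutation. Then the
  out-degree of a vertex v is the number of transpositions t with t v < v, i.e. the number of
  inversions of v, which is its length: every such t v lies below v in the Bruhat order and hence
  in X_w. So out-degrees strictly decrease along directed edges.\<close>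

lemma palais_smale_graphI:
  fixes f :: "'a \<Rightarrow> nat"
  assumes edges: "\<And>e. e \<in> E \<Longrightarrow> \<exists>x y. e = {x, y} \<and> f x \<noteq> f y"
    and out_degree: "\<And>v. v \<in> \<Union>E \<Longrightarrow> card {u. {v, u} \<in> E \<and> f u < f v} = f v"
  shows "palais_smale_graph E"
proof -
  define D where "D = {(x, y). {x, y} \<in> E \<and> f y < f x}"
  have "is_orientation E D"
    unfolding is_orientation_def
  proof (intro conjI ballI)
    fix e assume "e \<in> E"
    with edges obtain x y where "e = {x, y}" "f x \<noteq> f y" by blast
    with \<open>e \<in> E\<close> show "\<exists>x y. e = {x, y} \<and> x \<noteq> y \<and> ((x, y) \<in> D \<longleftrightarrow> (y, x) \<notin> D)"
      by (intro exI[of _ x] exI[of _ y]) (auto simp: D_def insert_commute)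
  qed (auto simp: D_def)
  moreover have "out_degree D u < out_degree D v" if "(v, u) \<in> D" for v u
  proof -
    from that have "{v, u} \<in> E" "f u < f v" by (auto simp: D_def)
    moreover have "out_degree D x = f x" if "x \<in> {u, v}" for x
      using that \<open>{v, u} \<in> E\<close> out_degree[of x] by (auto simp: out_degree_def D_def)
    ultimately show ?thesis by simp
  qed
  ultimately show ?thesis
    unfolding palais_smale_graph_def by blast
qed

definition inversions :: "nat \<Rightarrow> (nat \<Rightarrow> nat) \<Rightarrow> (nat \<times> nat) set" where
  "inversions n \<sigma> = {(i, j). i < j \<and> j < n \<and> \<sigma> j < \<sigma> i}"

lemma perm_length_eq_card_inversions: "perm_length n w = card (inversions n (inv w))"
  by (simp add: perm_length_def inversions_def)

lemma finite_inversions: "finite (inversions n \<sigma>)"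
  by (rule finite_subset[of _ "{..<n} \<times> {..<n}"]) (auto simp: inversions_def)

text \<open>Sorting the pair (t a, t b) maps the inversions of \<sigma> \<circ> t injectively into those of \<sigma>,
  missing the inversion (j, k) itself.\<close>
lemma card_inversions_comp_transpose_less:
  assumes "j < k" "k < n" "\<sigma> k < \<sigma> j"
  shows "card (inversions n (\<sigma> \<circ> transpose j k)) < card (inversions n \<sigma>)"
proof -
  let ?t = "transpose j k"
  define sort_pair where "sort_pair = (\<lambda>(a, b). if ?t a < ?t b then (?t a, ?t b) else (a, b))"
  have "inj_on sort_pair (inversions n (\<sigma> \<circ> ?t))"
    unfolding inj_on_def inversions_def sort_pair_def transpose_def by (auto split: if_splits)
  then have "card (inversions n (\<sigma> \<circ> ?t)) = card (sort_pair ` inversions n (\<sigma> \<circ> ?t))"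
    by (simp add: card_image)
  also have "\<dots> \<le> card (inversions n \<sigma> - {(j, k)})"
    using assms
    by (intro card_mono finite_Diff finite_inversions)
      (auto simp: inversions_def sort_pair_def transpose_def split: if_splits)
  also have "\<dots> < card (inversions n \<sigma>)"
    using assms by (intro card_Diff1_less finite_inversions) (simp add: inversions_def)
  finally show ?thesis .
qed

lemma bij_of_Sn: "v \<in> Sn n \<Longrightarrow> bij v"
  by (auto simp: Sn_def intro: permutes_bij)

lemma transpose_comp_in_Sn: "v \<in> Sn n \<Longrightarrow> j < n \<Longrightarrow> k < n \<Longrightarrow> transpose j k \<circ> v \<in> Sn n"
  by (simp add: Sn_def permutes_compose permutes_swap_id)

lemma inv_transpose_comp: "bij v \<Longrightarrow> inv (transpose j k \<circ> v) = inv v \<circ> transpose j k"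
  by (simp add: o_inv_distrib)

lemma perm_length_transpose_comp_less:
  assumes "v \<in> Sn n" "j < k" "k < n" "inv v k < inv v j"
  shows "perm_length n (transpose j k \<circ> v) < perm_length n v"
  using card_inversions_comp_transpose_less[OF assms(2-4)] bij_of_Sn[OF assms(1)]
  by (simp add: perm_length_eq_card_inversions inv_transpose_comp)

lemma perm_length_transpose_comp_greater:
  assumes v: "v \<in> Sn n" and "j < k" "k < n" "inv v j < inv v k"
  shows "perm_length n v < perm_length n (transpose j k \<circ> v)"
proof -
  let ?u = "transpose j k \<circ> v"
  have "inv ?u k < inv ?u j"
    using bij_of_Sn[OF v] assms(4) by (simp add: inv_transpose_comp)
  then have "perm_length n (transpose j k \<circ> ?u) < perm_length n ?u"
    using assms transpose_comp_in_Sn by (intro perm_length_transpose_comp_less) auto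
  then show ?thesis
    by (simp add: comp_assoc[symmetric])
qed

lemma inv_of_Sn_neq: "v \<in> Sn n \<Longrightarrow> j \<noteq> k \<Longrightarrow> inv v j \<noteq> inv v k"
  by (metis bij_of_Sn bij_imp_bij_inv bij_is_inj inj_eq)

lemma perm_length_transpose_comp_cases:
  assumes "v \<in> Sn n" "j < k" "k < n"
  obtains "inv v k < inv v j" "perm_length n (transpose j k \<circ> v) < perm_length n v"
    | "inv v j < inv v k" "perm_length n v < perm_length n (transpose j k \<circ> v)"
proof -
  have "inv v j \<noteq> inv v k"
    using inv_of_Sn_neq[OF assms(1)] \<open>j < k\<close> by simp
  then consider "inv v k < inv v j" | "inv v j < inv v k"
    by linarith
  then show ?thesis
  proof cases
    case 1
    with that(1) show ?thesis
      using perm_length_transpose_comp_less[OF assms] by simp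
  next
    case 2
    with that(2) show ?thesis
      using perm_length_transpose_comp_greater[OF assms] by simp
  qed
qed

lemma perm_length_transpose_comp_neq:
  assumes "v \<in> Sn n" "j < k" "k < n"
  shows "perm_length n (transpose j k \<circ> v) \<noteq> perm_length n v"
  using assms by (cases rule: perm_length_transpose_comp_cases) auto

lemma perm_length_transpose_comp_less_iff:
  assumes "v \<in> Sn n" "j < k" "k < n"
  shows "perm_length n (transpose j k \<circ> v) < perm_length n v \<longleftrightarrow> inv v k < inv v j"
  using assms by (cases rule: perm_length_transpose_comp_cases) auto

lemma transpose_comp_mem_mg_vertices:
  assumes v: "v \<in> mg_vertices n w" and "j < k" "k < n" "inv v k < inv v j"
  shows "transpose j k \<circ> v \<in> mg_vertices n w"
proof -
  let ?u = "transpose j k \<circ> v"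
  have "v \<in> Sn n" using v by (simp add: mg_vertices_def)
  then have u: "?u \<in> Sn n"
    using assms transpose_comp_in_Sn by simp
  have "transpose j k \<circ> ?u = v"
    by (simp add: comp_assoc[symmetric])
  then have "bruhat_step n ?u v"
    unfolding bruhat_step_def
    using u assms perm_length_transpose_comp_less[OF \<open>v \<in> Sn n\<close>]
    by (intro conjI exI[of _ j] exI[of _ k]) auto
  moreover have "(bruhat_step n)\<^sup>*\<^sup>* v w"
    using v by (simp add: mg_vertices_def bruhat_le_def)
  ultimately show ?thesis
    using u by (simp add: mg_vertices_def bruhat_le_def)
qed

lemma inj_on_transpose_comp:
  fixes v :: "'a \<Rightarrow> 'b::linorder"
  assumes "bij v"
  shows "inj_on (\<lambda>(j, k). transpose j k \<circ> v) {(j, k). j < k}"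
proof (rule inj_onI)
  fix p q
  assume "p \<in> {(j, k). j < k}" "q \<in> {(j, k). j < k}"
    "(\<lambda>(j, k). transpose j k \<circ> v) p = (\<lambda>(j, k). transpose j k \<circ> v) q"
  then obtain j k j' k' where pq: "p = (j, k)" "q = (j', k')" "j < k" "j' < k'"
    "transpose j k \<circ> v = transpose j' k' \<circ> v"
    by auto
  then have "transpose j' k' = transpose j k"
    using assms by (metis bij_is_surj surj_fun_eq)
  then have "transpose j' k' j = k" "transpose j' k' k = j"
    by simp_all
  with pq show "p = q"
    by (auto simp: transpose_def split: if_splits)
qed

lemma mg_edges_lower_neighbours:
  assumes v: "v \<in> mg_vertices n w"
  shows "{u. {v, u} \<in> mg_edges n w \<and> perm_length n u < perm_length n v}
    = (\<lambda>(j, k). transpose j k \<circ> v) ` inversions n (inv v)"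
proof -
  have vS: "v \<in> Sn n" using v by (simp add: mg_vertices_def)
  have edge_iff: "{v, u} \<in> mg_edges n w \<longleftrightarrow>
      (\<exists>j k. j < k \<and> k < n \<and> u = transpose j k \<circ> v \<and> u \<in> mg_vertices n w)" for u
  proof
    assume "{v, u} \<in> mg_edges n w"
    then obtain x j k where x: "{v, u} = {x, transpose j k \<circ> x}" "j < k" "k < n"
      "x \<in> mg_vertices n w" "transpose j k \<circ> x \<in> mg_vertices n w"
      unfolding mg_edges_def by blast
    have "transpose j k \<circ> (transpose j k \<circ> x) = x"
      by (simp add: comp_assoc[symmetric])
    with x(1) have "u = transpose j k \<circ> v \<and> u \<in> mg_vertices n w"
      using x(4,5) by (auto simp: doubleton_eq_iff)
    with x(2,3) show "\<exists>j k. j < k \<and> k < n \<and> u = transpose j k \<circ> v \<and> u \<in> mg_vertices n w"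
      by blast
  qed (use v in \<open>auto simp: mg_edges_def\<close>)
  show ?thesis
  proof (intro set_eqI iffI)
    fix u assume "u \<in> {u. {v, u} \<in> mg_edges n w \<and> perm_length n u < perm_length n v}"
    then obtain j k where "j < k" "k < n" "u = transpose j k \<circ> v"
      "perm_length n (transpose j k \<circ> v) < perm_length n v"
      unfolding edge_iff by blast
    moreover from this have "(j, k) \<in> inversions n (inv v)"
      using perm_length_transpose_comp_less_iff[OF vS] by (simp add: inversions_def)
    ultimately show "u \<in> (\<lambda>(j, k). transpose j k \<circ> v) ` inversions n (inv v)"
      by (intro image_eqI[of _ _ "(j, k)"]) simp_all
  next
    fix u assume "u \<in> (\<lambda>(j, k). transpose j k \<circ> v) ` inversions n (inv v)"
    then obtain j k where jk: "j < k" "k < n" "inv v k < inv v j" and u: "u = transpose j k \<circ> v"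
      by (auto simp: inversions_def)
    have "u \<in> mg_vertices n w"
      unfolding u using transpose_comp_mem_mg_vertices[OF v jk] .
    moreover have "perm_length n u < perm_length n v"
      unfolding u using perm_length_transpose_comp_less[OF vS jk] .
    ultimately show "u \<in> {u. {v, u} \<in> mg_edges n w \<and> perm_length n u < perm_length n v}"
      unfolding edge_iff using jk u by blast
  qed
qed

lemma card_mg_edges_lower_neighbours:
  assumes v: "v \<in> mg_vertices n w"
  shows "card {u. {v, u} \<in> mg_edges n w \<and> perm_length n u < perm_length n v} = perm_length n v"
proof -
  from v have "bij v" using bij_of_Sn by (auto simp: mg_vertices_def)
  have "inversions n (inv v) \<subseteq> {(j, k). j < k}"
    by (auto simp: inversions_def)
  then have "inj_on (\<lambda>(j, k). transpose j k \<circ> v) (inversions n (inv v))"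
    using inj_on_transpose_comp[OF \<open>bij v\<close>] by (rule inj_on_subset[rotated])
  then have "card ((\<lambda>(j, k). transpose j k \<circ> v) ` inversions n (inv v)) = perm_length n v"
    by (simp add: card_image perm_length_eq_card_inversions)
  then show ?thesis
    by (simp only: mg_edges_lower_neighbours[OF v])
qed

theorem mainTheorem3:
  fixes n :: nat and w :: perm
  assumes "w \<in> Sn n"
  shows "schubert_palais_smale n w"
  unfolding schubert_palais_smale_def
proof (rule palais_smale_graphI[where f = "perm_length n"])
  fix e assume "e \<in> mg_edges n w"
  then obtain v j k where "e = {v, transpose j k \<circ> v}" "j < k" "k < n" "v \<in> mg_vertices n w"
    unfolding mg_edges_def by blast
  moreover from \<open>v \<in> mg_vertices n w\<close> \<open>j < k\<close> \<open>k < n\<close>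
  have "perm_length n (transpose j k \<circ> v) \<noteq> perm_length n v"
    by (simp add: mg_vertices_def perm_length_transpose_comp_neq)
  ultimately show "\<exists>x y. e = {x, y} \<and> perm_length n x \<noteq> perm_length n y"
    by blast
next
  fix v assume "v \<in> \<Union>(mg_edges n w)"
  then have "v \<in> mg_vertices n w"
    by (auto simp: mg_edges_def)
  then show "card {u. {v, u} \<in> mg_edges n w \<and> perm_length n u < perm_length n v}
      = perm_length n v"
    by (rule card_mg_edges_lower_neighbours)
qed

end
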